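(* Let $(E,C)$ be a configuration structure. Then $C$ is closed under finitely compatible unions iff it is closed under bounded unions and under directed unions. Moreover, $C$ is coherent iff it is closed under bounded unions and weakly coherent.
   Context: $C\subseteq\mathcal{P}(E)$. A set $X$ is consistent if $X\subseteq z$ for some $z\in C$. Closed under bounded unions: $A\subseteq C$ with $\bigcup A$ consistent implies $\bigcup A\in C$. Closed under directed unions: every nonempty $A\subseteq C$ such that any $x,y\in A$ have $z\in A$ with $x\cup y\subseteq z$ satisfies $\bigcup A\in C$. Closed under finitely compatible unions: $A\subseteq C$ with $\bigcup F$ consistent for every finite $F\subseteq A$ implies $\bigcup A\in C$. Coherent: $A\subseteq C$ with $x\cup y$ consistent for all $x,y\in A$ implies $\bigcup A\in C$. Weakly coherent: every $A\subseteq C$ such that all $x,y\in A$ have $z\in C$ with $x\cup y\subseteq z\subseteq\bigcup A$ satisfies $\bigcup A\in C$. *)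

theory Defs
  imports Main
begin

definition configuration_structure :: "'a set \<Rightarrow> 'a set set \<Rightarrow> bool" where
  "configuration_structure E C \<longleftrightarrow> C \<subseteq> Pow E"

definition consistent :: "'a set set \<Rightarrow> 'a set \<Rightarrow> bool" where
  "consistent C X \<longleftrightarrow> (\<exists>z\<in>C. X \<subseteq> z)"

definition closed_bounded_unions :: "'a set set \<Rightarrow> bool" where
  "closed_bounded_unions C \<longleftrightarrow>
     (\<forall>A. A \<subseteq> C \<and> consistent C (\<Union>A) \<longrightarrow> \<Union>A \<in> C)"

definition closed_directed_unions :: "'a set set \<Rightarrow> bool" where
  "closed_directed_unions C \<longleftrightarrow>
     (\<forall>A. A \<subseteq> C \<and> A \<noteq> {} \<and> (\<forall>x\<in>A. \<forall>y\<in>A. \<exists>z\<in>A. x \<union> y \<subseteq> z) \<longrightarrow> \<Union>A \<in> C)"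

definition closed_fin_compat_unions :: "'a set set \<Rightarrow> bool" where
  "closed_fin_compat_unions C \<longleftrightarrow>
     (\<forall>A. A \<subseteq> C \<and> (\<forall>F. finite F \<and> F \<subseteq> A \<longrightarrow> consistent C (\<Union>F)) \<longrightarrow> \<Union>A \<in> C)"

definition coherent :: "'a set set \<Rightarrow> bool" where
  "coherent C \<longleftrightarrow>
     (\<forall>A. A \<subseteq> C \<and> (\<forall>x\<in>A. \<forall>y\<in>A. consistent C (x \<union> y)) \<longrightarrow> \<Union>A \<in> C)"

definition weakly_coherent :: "'a set set \<Rightarrow> bool" where
  "weakly_coherent C \<longleftrightarrow>
     (\<forall>A. A \<subseteq> C \<and> (\<forall>x\<in>A. \<forall>y\<in>A. \<exists>z\<in>C. x \<union> y \<subseteq> z \<and> z \<subseteq> \<Union>A) \<longrightarrow> \<Union>A \<in> C)"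

end

theory Submission
  imports Defs
begin

text \<open>
  A union of a finitely compatible family is the directed union of the unions of its finite
  subfamilies, each of which is a bounded union; conversely bounded and directed families are
  finitely compatible. For coherence, pairwise consistency lets bounded unions supply the
  witnesses \<open>x \<union> y\<close> required by weak coherence, while a family whose pairwise unions are
  witnessed inside \<open>C\<close> is in particular pairwise consistent.
\<close>

lemma closed_bounded_unionsI:
  assumes "\<And>A. A \<subseteq> C \<Longrightarrow> consistent C (\<Union>A) \<Longrightarrow> \<Union>A \<in> C"
  shows "closed_bounded_unions C"
  using assms unfolding closed_bounded_unions_def by blast

lemma closed_bounded_unionsD:
  assumes "closed_bounded_unions C" "A \<subseteq> C" "consistent C (\<Union>A)"
  shows "\<Union>A \<in> C"
  using assms unfolding closed_bounded_unions_def by blast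

lemma closed_directed_unionsI:
  assumes "\<And>A. A \<subseteq> C \<Longrightarrow> A \<noteq> {} \<Longrightarrow> (\<And>x y. x \<in> A \<Longrightarrow> y \<in> A \<Longrightarrow> \<exists>z\<in>A. x \<union> y \<subseteq> z)
      \<Longrightarrow> \<Union>A \<in> C"
  shows "closed_directed_unions C"
  unfolding closed_directed_unions_def using assms by auto

lemma closed_directed_unionsD:
  assumes "closed_directed_unions C" "A \<subseteq> C" "A \<noteq> {}"
    and "\<And>x y. x \<in> A \<Longrightarrow> y \<in> A \<Longrightarrow> \<exists>z\<in>A. x \<union> y \<subseteq> z"
  shows "\<Union>A \<in> C"
  using assms unfolding closed_directed_unions_def by auto

lemma closed_fin_compat_unionsI:
  assumes "\<And>A. A \<subseteq> C \<Longrightarrow> (\<And>F. finite F \<Longrightarrow> F \<subseteq> A \<Longrightarrow> consistent C (\<Union>F)) \<Longrightarrow> \<Union>A \<in> C"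
  shows "closed_fin_compat_unions C"
  unfolding closed_fin_compat_unions_def using assms by auto

lemma closed_fin_compat_unionsD:
  assumes "closed_fin_compat_unions C" "A \<subseteq> C"
    and "\<And>F. finite F \<Longrightarrow> F \<subseteq> A \<Longrightarrow> consistent C (\<Union>F)"
  shows "\<Union>A \<in> C"
  using assms unfolding closed_fin_compat_unions_def by blast

lemma coherentI:
  assumes "\<And>A. A \<subseteq> C \<Longrightarrow> (\<And>x y. x \<in> A \<Longrightarrow> y \<in> A \<Longrightarrow> consistent C (x \<union> y)) \<Longrightarrow> \<Union>A \<in> C"
  shows "coherent C"
  unfolding coherent_def using assms by auto

lemma coherentD:
  assumes "coherent C" "A \<subseteq> C" "\<And>x y. x \<in> A \<Longrightarrow> y \<in> A \<Longrightarrow> consistent C (x \<union> y)"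
  shows "\<Union>A \<in> C"
  using assms unfolding coherent_def by auto

lemma weakly_coherentI:
  assumes "\<And>A. A \<subseteq> C \<Longrightarrow> (\<And>x y. x \<in> A \<Longrightarrow> y \<in> A \<Longrightarrow> \<exists>z\<in>C. x \<union> y \<subseteq> z \<and> z \<subseteq> \<Union>A)
      \<Longrightarrow> \<Union>A \<in> C"
  shows "weakly_coherent C"
  unfolding weakly_coherent_def using assms by auto

lemma weakly_coherentD:
  assumes "weakly_coherent C" "A \<subseteq> C"
    and "\<And>x y. x \<in> A \<Longrightarrow> y \<in> A \<Longrightarrow> \<exists>z\<in>C. x \<union> y \<subseteq> z \<and> z \<subseteq> \<Union>A"
  shows "\<Union>A \<in> C"
  using assms unfolding weakly_coherent_def by auto

lemma consistent_subset: "consistent C Y \<Longrightarrow> X \<subseteq> Y \<Longrightarrow> consistent C X"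
  unfolding consistent_def by blast

lemma consistent_member: "x \<in> C \<Longrightarrow> consistent C x"
  unfolding consistent_def by blast

lemma directed_finite_Union_bounded:
  assumes "finite F" "F \<subseteq> A" "A \<noteq> {}"
    and directed: "\<And>x y. x \<in> A \<Longrightarrow> y \<in> A \<Longrightarrow> \<exists>z\<in>A. x \<union> y \<subseteq> z"
  shows "\<exists>z\<in>A. \<Union>F \<subseteq> z"
  using assms(1,2)
proof (induction F rule: finite_induct)
  case empty
  then show ?case using \<open>A \<noteq> {}\<close> by auto
next
  case (insert x F)
  then obtain z where "z \<in> A" "\<Union>F \<subseteq> z" "x \<in> A" by auto
  then obtain w where "w \<in> A" "x \<union> z \<subseteq> w" using directed by blast
  then show ?case using \<open>\<Union>F \<subseteq> z\<close> by auto
qed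

lemma Union_finite_subfamily_Unions: "\<Union>{\<Union>F | F. finite F \<and> F \<subseteq> A} = \<Union>A"
proof
  show "\<Union>A \<subseteq> \<Union>{\<Union>F | F. finite F \<and> F \<subseteq> A}"
  proof
    fix e assume "e \<in> \<Union>A"
    then obtain a where "a \<in> A" "e \<in> a" by blast
    then have "\<Union>{a} \<in> {\<Union>F | F. finite F \<and> F \<subseteq> A}" by blast
    then show "e \<in> \<Union>{\<Union>F | F. finite F \<and> F \<subseteq> A}" using \<open>e \<in> a\<close> by auto
  qed
qed auto

lemma closed_bounded_unions_Un:
  assumes "closed_bounded_unions C" "x \<in> C" "y \<in> C" "consistent C (x \<union> y)"
  shows "x \<union> y \<in> C"
  using closed_bounded_unionsD[OF assms(1), of "{x, y}"] assms(2-4) by simp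

lemma closed_fin_compat_unions_imp_bounded:
  assumes "closed_fin_compat_unions C"
  shows "closed_bounded_unions C"
proof (rule closed_bounded_unionsI)
  fix A assume "A \<subseteq> C" and bounded: "consistent C (\<Union>A)"
  have "consistent C (\<Union>F)" if "F \<subseteq> A" for F
    using bounded Union_mono[OF that] by (rule consistent_subset)
  then show "\<Union>A \<in> C" by (rule closed_fin_compat_unionsD[OF assms \<open>A \<subseteq> C\<close>])
qed

lemma closed_fin_compat_unions_imp_directed:
  assumes "closed_fin_compat_unions C"
  shows "closed_directed_unions C"
proof (rule closed_directed_unionsI)
  fix A assume A: "A \<subseteq> C" "A \<noteq> {}"
    and directed: "\<And>x y. x \<in> A \<Longrightarrow> y \<in> A \<Longrightarrow> \<exists>z\<in>A. x \<union> y \<subseteq> z"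
  have "consistent C (\<Union>F)" if F: "finite F" "F \<subseteq> A" for F
  proof -
    obtain z where "z \<in> A" "\<Union>F \<subseteq> z"
      using directed_finite_Union_bounded[OF F \<open>A \<noteq> {}\<close> directed] by blast
    have "consistent C z" using \<open>z \<in> A\<close> \<open>A \<subseteq> C\<close> by (intro consistent_member) blast
    then show ?thesis using \<open>\<Union>F \<subseteq> z\<close> by (rule consistent_subset)
  qed
  then show "\<Union>A \<in> C" by (rule closed_fin_compat_unionsD[OF assms \<open>A \<subseteq> C\<close>])
qed

lemma bounded_directed_imp_closed_fin_compat_unions:
  assumes bounded: "closed_bounded_unions C" and directed: "closed_directed_unions C"
  shows "closed_fin_compat_unions C"
proof (rule closed_fin_compat_unionsI)
  fix A assume "A \<subseteq> C" and compat: "\<And>F. finite F \<Longrightarrow> F \<subseteq> A \<Longrightarrow> consistent C (\<Union>F)"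
  define D where "D = {\<Union>F | F. finite F \<and> F \<subseteq> A}"
  have "D \<subseteq> C"
  proof
    fix u assume "u \<in> D"
    then obtain F where "u = \<Union>F" "finite F" "F \<subseteq> A" unfolding D_def by blast
    moreover have "F \<subseteq> C" using \<open>F \<subseteq> A\<close> \<open>A \<subseteq> C\<close> by (rule order_trans)
    ultimately show "u \<in> C" using closed_bounded_unionsD[OF bounded] compat by simp
  qed
  moreover have "D \<noteq> {}"
  proof -
    have "\<Union>{} \<in> D" unfolding D_def by blast
    then show ?thesis by blast
  qed
  moreover have "\<exists>z\<in>D. x \<union> y \<subseteq> z" if "x \<in> D" "y \<in> D" for x y
  proof -
    obtain F where F: "x = \<Union>F" "finite F" "F \<subseteq> A" using \<open>x \<in> D\<close> unfolding D_def by blast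
    obtain G where G: "y = \<Union>G" "finite G" "G \<subseteq> A" using \<open>y \<in> D\<close> unfolding D_def by blast
    have "\<Union>(F \<union> G) \<in> D"
      unfolding D_def using F G by (intro CollectI exI[of _ "F \<union> G"]) simp
    moreover have "x \<union> y \<subseteq> \<Union>(F \<union> G)" using F G by simp
    ultimately show ?thesis by blast
  qed
  ultimately have "\<Union>D \<in> C" by (rule closed_directed_unionsD[OF directed])
  then show "\<Union>A \<in> C" unfolding D_def Union_finite_subfamily_Unions .
qed

lemma closed_fin_compat_unions_iff:
  "closed_fin_compat_unions C \<longleftrightarrow> closed_bounded_unions C \<and> closed_directed_unions C"
  using closed_fin_compat_unions_imp_bounded closed_fin_compat_unions_imp_directed
    bounded_directed_imp_closed_fin_compat_unions by blast

lemma coherent_imp_closed_bounded_unions: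
  assumes "coherent C"
  shows "closed_bounded_unions C"
proof (rule closed_bounded_unionsI)
  fix A assume "A \<subseteq> C" and bounded: "consistent C (\<Union>A)"
  have "consistent C (x \<union> y)" if "x \<in> A" "y \<in> A" for x y
    using bounded by (rule consistent_subset) (use that in blast)
  then show "\<Union>A \<in> C" by (rule coherentD[OF assms \<open>A \<subseteq> C\<close>])
qed

lemma coherent_imp_weakly_coherent:
  assumes "coherent C"
  shows "weakly_coherent C"
proof (rule weakly_coherentI)
  fix A assume "A \<subseteq> C"
    and witnessed: "\<And>x y. x \<in> A \<Longrightarrow> y \<in> A \<Longrightarrow> \<exists>z\<in>C. x \<union> y \<subseteq> z \<and> z \<subseteq> \<Union>A"
  have "consistent C (x \<union> y)" if "x \<in> A" "y \<in> A" for x y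
    using witnessed[OF that] unfolding consistent_def by blast
  then show "\<Union>A \<in> C" by (rule coherentD[OF assms \<open>A \<subseteq> C\<close>])
qed

lemma bounded_weakly_coherent_imp_coherent:
  assumes bounded: "closed_bounded_unions C" and weak: "weakly_coherent C"
  shows "coherent C"
proof (rule coherentI)
  fix A assume "A \<subseteq> C" and pairwise: "\<And>x y. x \<in> A \<Longrightarrow> y \<in> A \<Longrightarrow> consistent C (x \<union> y)"
  have "\<exists>z\<in>C. x \<union> y \<subseteq> z \<and> z \<subseteq> \<Union>A" if "x \<in> A" "y \<in> A" for x y
  proof -
    have "x \<union> y \<in> C"
      using closed_bounded_unions_Un[OF bounded _ _ pairwise[OF that]] that \<open>A \<subseteq> C\<close> by blast
    then show ?thesis using that by blast
  qed
  then show "\<Union>A \<in> C" by (rule weakly_coherentD[OF weak \<open>A \<subseteq> C\<close>])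
qed

lemma coherent_iff: "coherent C \<longleftrightarrow> closed_bounded_unions C \<and> weakly_coherent C"
  using coherent_imp_closed_bounded_unions coherent_imp_weakly_coherent
    bounded_weakly_coherent_imp_coherent by blast

text \<open>Both equivalences hold for an arbitrary family \<open>C\<close>.\<close>

theorem mainTheorem15:
  fixes E :: "'a set" and C :: "'a set set"
  assumes "configuration_structure E C"
  shows "(closed_fin_compat_unions C \<longleftrightarrow>
            closed_bounded_unions C \<and> closed_directed_unions C)
       \<and> (coherent C \<longleftrightarrow> closed_bounded_unions C \<and> weakly_coherent C)"
  using closed_fin_compat_unions_iff coherent_iff by blast

end
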